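(* Let $R$ be a ring, $S\in\mathrm{Den}_l(R,\mathfrak a)$, $\pi:R\to R/\mathfrak a$, $a\mapsto a+\mathfrak a$, and $\sigma:R\to S^{-1}R$, $r\mapsto r/1$ (so $R/\mathfrak a$ is identified with the subring $\sigma(R)$ of $S^{-1}R$). (1) Let $T\in\mathrm{Den}_l(S^{-1}R,0)$ be such that $\sigma(S)\subseteq T$ and $\{\sigma(s)^{-1}\mid s\in S\}\subseteq T$. Then $T':=\sigma^{-1}(T)\in\mathrm{Den}_l(R,\mathfrak a)$, $T'$ is $S$-saturated, $T=\{\sigma(s)^{-1}\sigma(t')\mid s\in S, t'\in T'\}$, the natural ring homomorphism $S^{-1}R\to T'^{-1}R$ is injective, and $T'^{-1}R\cong T^{-1}(S^{-1}R)$ naturally. (2) $\pi^{-1}(S_0(R/\mathfrak a))=S_{\mathfrak a}(R)$, $\pi(S_{\mathfrak a}(R))=S_0(R/\mathfrak a)$, and $Q_{\mathfrak a}(R):=S_{\mathfrak a}(R)^{-1}R\cong Q_l(R/\mathfrak a)$.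
   Context: Rings are associative with $1$. A multiplicatively closed subset $S$ ($1\in S$, $0\notin S$, closed under products) is a left Ore set if $Sr\cap Rs\ne\emptyset$ for all $r\in R,s\in S$; $\mathrm{ass}(S):=\{r\mid sr=0\text{ for some }s\in S\}$; it is a left denominator set if moreover $rs=0$ ($s\in S$) implies $tr=0$ for some $t\in S$. $\mathrm{Den}_l(R,\mathfrak a)$ is the set of left denominator sets $S$ with $\mathrm{ass}(S)=\mathfrak a$; it has a largest element under inclusion, $S_{\mathfrak a}(R)$. $S_0(A)$ denotes the largest element of $\mathrm{Den}_l(A,0)$ for a ring $A$, and $Q_l(A):=S_0(A)^{-1}A$. For $S,T'\in\mathrm{Den}_l(R)$, $T'$ is $S$-saturated if $sr\in T'$ ($s\in S,r\in R$) implies $r\in T'$, and $r's'\in T'$ ($s'\in S,r'\in R$) implies $r'\in T'$. *)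

theory Defs
  imports "HOL-Algebra.Algebra"
begin

definition mult_closed :: "('a, 'm) ring_scheme \<Rightarrow> 'a set \<Rightarrow> bool" where
  "mult_closed R S \<longleftrightarrow> S \<subseteq> carrier R \<and> \<one>\<^bsub>R\<^esub> \<in> S \<and> \<zero>\<^bsub>R\<^esub> \<notin> S \<and>
     (\<forall>s\<in>S. \<forall>t\<in>S. s \<otimes>\<^bsub>R\<^esub> t \<in> S)"

definition left_ore :: "('a, 'm) ring_scheme \<Rightarrow> 'a set \<Rightarrow> bool" where
  "left_ore R S \<longleftrightarrow> mult_closed R S \<and>
     (\<forall>r\<in>carrier R. \<forall>s\<in>S. \<exists>s'\<in>S. \<exists>r'\<in>carrier R. s' \<otimes>\<^bsub>R\<^esub> r = r' \<otimes>\<^bsub>R\<^esub> s)"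

definition ass :: "('a, 'm) ring_scheme \<Rightarrow> 'a set \<Rightarrow> 'a set" where
  "ass R S = {r \<in> carrier R. \<exists>s\<in>S. s \<otimes>\<^bsub>R\<^esub> r = \<zero>\<^bsub>R\<^esub>}"

definition left_den :: "('a, 'm) ring_scheme \<Rightarrow> 'a set \<Rightarrow> bool" where
  "left_den R S \<longleftrightarrow> left_ore R S \<and>
     (\<forall>r\<in>carrier R. \<forall>s\<in>S. r \<otimes>\<^bsub>R\<^esub> s = \<zero>\<^bsub>R\<^esub> \<longrightarrow> (\<exists>t\<in>S. t \<otimes>\<^bsub>R\<^esub> r = \<zero>\<^bsub>R\<^esub>))"

definition Den_l :: "('a, 'm) ring_scheme \<Rightarrow> 'a set \<Rightarrow> 'a set set" where
  "Den_l R a = {S. left_den R S \<and> ass R S = a}"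

definition S_max :: "('a, 'm) ring_scheme \<Rightarrow> 'a set \<Rightarrow> 'a set" where
  "S_max R a = Greatest (\<lambda>S. S \<in> Den_l R a)"

definition S0 :: "('a, 'm) ring_scheme \<Rightarrow> 'a set" where
  "S0 A = S_max A {\<zero>\<^bsub>A\<^esub>}"

definition S_saturated :: "('a, 'm) ring_scheme \<Rightarrow> 'a set \<Rightarrow> 'a set \<Rightarrow> bool" where
  "S_saturated R S T' \<longleftrightarrow>
     (\<forall>s\<in>S. \<forall>r\<in>carrier R. s \<otimes>\<^bsub>R\<^esub> r \<in> T' \<longrightarrow> r \<in> T') \<and>
     (\<forall>s\<in>S. \<forall>r\<in>carrier R. r \<otimes>\<^bsub>R\<^esub> s \<in> T' \<longrightarrow> r \<in> T')"

text \<open>S^{-1}R denotes any such ring; it is unique up to a unique isomorphism over R.\<close>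
definition is_left_loc ::
  "('a, 'm) ring_scheme \<Rightarrow> 'a set \<Rightarrow> ('b, 'n) ring_scheme \<Rightarrow> ('a \<Rightarrow> 'b) \<Rightarrow> bool" where
  "is_left_loc R S Q \<sigma> \<longleftrightarrow> ring Q \<and> \<sigma> \<in> ring_hom R Q \<and>
     (\<forall>s\<in>S. \<sigma> s \<in> Units Q) \<and>
     (\<forall>q\<in>carrier Q. \<exists>s\<in>S. \<exists>r\<in>carrier R. q = inv\<^bsub>Q\<^esub> (\<sigma> s) \<otimes>\<^bsub>Q\<^esub> \<sigma> r) \<and>
     {r \<in> carrier R. \<sigma> r = \<zero>\<^bsub>Q\<^esub>} = ass R S"

end

theory Submission
  imports Defs
begin

text \<open>
  Both \<open>\<sigma> : R \<rightarrow> S\<inverse>R\<close> and \<open>\<pi> : R \<rightarrow> R/\<aa>\<close> have kernel \<open>\<aa> = ass(S)\<close>, and every element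
  of the target becomes an image after left multiplication by the image of some \<open>s \<in> S\<close>.
  For such a map \<open>h\<close> and a left denominator set \<open>U\<close> with \<open>ass(U) = 0\<close> containing \<open>h(S)\<close>,
  the preimage \<open>h\<inverse>(U)\<close> is a left denominator set with \<open>ass = \<aa>\<close>: the Ore and
  denominator conditions of \<open>U\<close> are pulled back by clearing denominators, and
  \<open>h(x) = h(y)\<close> forces \<open>sx = sy\<close> for some \<open>s \<in> S\<close>. With \<open>h = \<sigma>\<close> this gives \<open>T'\<close>;
  with \<open>h = \<pi>\<close> and \<open>U = S\<^sub>0(R/\<aa>)\<close> it gives the largest element of \<open>Den\<^sub>l(R,\<aa>)\<close>, since
  \<open>\<pi>\<close> maps every element of \<open>Den\<^sub>l(R,\<aa>)\<close> into \<open>Den\<^sub>l(R/\<aa>,0)\<close>.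
  The ring maps come from the universal property of left localization; they are
  injective because their kernels are controlled by \<open>\<aa>\<close>, and surjective because every
  element of the target is a left fraction of images. \<open>S\<^sub>0\<close> of a nonzero ring exists as
  the multiplicative closure of the union of all of \<open>Den\<^sub>l(A,0)\<close>.
\<close>


section \<open>Left fractions in monoids and rings\<close>

lemma (in monoid) Units_inv_mult_cancel [simp]:
  "u \<in> Units G \<Longrightarrow> x \<in> carrier G \<Longrightarrow> inv u \<otimes> (u \<otimes> x) = x"
  by (simp add: m_assoc[symmetric] Units_closed)

lemma (in monoid) Units_mult_inv_cancel [simp]:
  "u \<in> Units G \<Longrightarrow> x \<in> carrier G \<Longrightarrow> u \<otimes> (inv u \<otimes> x) = x"
  by (simp add: m_assoc[symmetric] Units_closed)

lemma (in monoid) Units_inv_mult: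
  assumes "u \<in> Units G" "v \<in> Units G"
  shows "inv (u \<otimes> v) = inv v \<otimes> inv u"
proof -
  have "(u \<otimes> v) \<otimes> (inv v \<otimes> inv u) = \<one>" "(inv v \<otimes> inv u) \<otimes> (u \<otimes> v) = \<one>"
    using assms by (simp_all add: m_assoc Units_closed)
  then show ?thesis using assms by (metis inv_unique' Units_closed Units_inv_closed m_closed)
qed

lemma (in monoid) Units_inv_mult_eq_iff:
  assumes "u \<in> Units G" "x \<in> carrier G" "y \<in> carrier G"
  shows "inv u \<otimes> x = y \<longleftrightarrow> x = u \<otimes> y"
  using assms by (metis Units_closed Units_inv_closed Units_l_cancel Units_r_inv l_one m_assoc m_closed)

lemma (in monoid) left_frac_eq_iff:
  assumes a: "a \<in> Units G" and b: "b \<in> Units G" and c: "c \<in> Units G" and d: "d \<in> carrier G"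
    and x: "x \<in> carrier G" and y: "y \<in> carrier G" and common: "c \<otimes> a = d \<otimes> b"
  shows "inv a \<otimes> x = inv b \<otimes> y \<longleftrightarrow> c \<otimes> x = d \<otimes> y"
proof -
  have "inv a \<otimes> x = inv (c \<otimes> a) \<otimes> (c \<otimes> x)"
    using a c x by (simp add: Units_inv_mult m_assoc Units_closed)
  moreover have "inv b \<otimes> y = inv (c \<otimes> a) \<otimes> (d \<otimes> y)"
  proof -
    have "d = c \<otimes> a \<otimes> inv b" using common b d by (simp add: m_assoc Units_closed)
    then show ?thesis using a b c y by (simp add: Units_inv_mult m_assoc Units_closed)
  qed
  ultimately show ?thesis
    using a c d x y by (simp add: Units_closed)
qed

lemma (in monoid) left_frac_mult:
  assumes a: "a \<in> Units G" and b: "b \<in> Units G" and c: "c \<in> Units G" and d: "d \<in> carrier G"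
    and x: "x \<in> carrier G" and y: "y \<in> carrier G" and swap: "c \<otimes> x = d \<otimes> b"
  shows "(inv a \<otimes> x) \<otimes> (inv b \<otimes> y) = inv (c \<otimes> a) \<otimes> (d \<otimes> y)"
proof -
  have "x = inv c \<otimes> (d \<otimes> b)"
    using swap c x by (metis Units_inv_mult_cancel)
  then have "x \<otimes> inv b = inv c \<otimes> d"
    using b c d by (simp add: m_assoc Units_closed)
  moreover have "(inv a \<otimes> x) \<otimes> (inv b \<otimes> y) = inv a \<otimes> (x \<otimes> inv b) \<otimes> y"
    using a b x y by (simp add: m_assoc Units_closed)
  ultimately have "(inv a \<otimes> x) \<otimes> (inv b \<otimes> y) = inv a \<otimes> (inv c \<otimes> d) \<otimes> y"
    by simp
  then show ?thesis
    using a c d y by (simp add: Units_inv_mult m_assoc Units_closed)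
qed

lemma (in ring) left_frac_add:
  assumes a: "a \<in> Units R" and b: "b \<in> Units R" and c: "c \<in> Units R" and d: "d \<in> carrier R"
    and x: "x \<in> carrier R" and y: "y \<in> carrier R" and common: "c \<otimes> a = d \<otimes> b"
  shows "inv a \<otimes> x \<oplus> inv b \<otimes> y = inv (c \<otimes> a) \<otimes> (c \<otimes> x \<oplus> d \<otimes> y)"
proof -
  have "inv (c \<otimes> a) \<otimes> c = inv a"
    using a c by (simp add: Units_inv_mult m_assoc Units_closed)
  moreover have "inv (c \<otimes> a) \<otimes> d = inv b"
  proof -
    have "d = c \<otimes> a \<otimes> inv b" using common b d by (simp add: m_assoc Units_closed)
    then show ?thesis using a b c by (simp add: Units_inv_mult m_assoc Units_closed)
  qed
  ultimately show ?thesis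
    using a c d x y by (simp add: r_distr m_assoc[symmetric] Units_closed)
qed

lemma ring_hom_Units:
  assumes "ring A" "ring B" "h \<in> ring_hom A B" "u \<in> Units A"
  shows "h u \<in> Units B" and "h (inv\<^bsub>A\<^esub> u) = inv\<^bsub>B\<^esub> (h u)"
proof -
  interpret h: ring_hom_ring A B h using assms by (intro ring_hom_ringI2)
  have "h u \<otimes>\<^bsub>B\<^esub> h (inv\<^bsub>A\<^esub> u) = \<one>\<^bsub>B\<^esub>" "h (inv\<^bsub>A\<^esub> u) \<otimes>\<^bsub>B\<^esub> h u = \<one>\<^bsub>B\<^esub>"
    using assms(4) by (simp_all add: h.hom_mult[symmetric] h.R.Units_closed)
  moreover have "h u \<in> carrier B" "h (inv\<^bsub>A\<^esub> u) \<in> carrier B"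
    using assms(4) by auto
  ultimately show "h u \<in> Units B" "h (inv\<^bsub>A\<^esub> u) = inv\<^bsub>B\<^esub> (h u)"
    unfolding Units_def using h.S.inv_unique' by auto
qed

lemma ring_hom_left_frac:
  assumes "ring A" "ring B" "h \<in> ring_hom A B" "u \<in> Units A" "x \<in> carrier A"
  shows "h (inv\<^bsub>A\<^esub> u \<otimes>\<^bsub>A\<^esub> x) = inv\<^bsub>B\<^esub> (h u) \<otimes>\<^bsub>B\<^esub> h x"
proof -
  interpret h: ring_hom_ring A B h using assms by (intro ring_hom_ringI2)
  show ?thesis using assms ring_hom_Units[OF assms(1-4)] by (simp add: h.R.Units_closed)
qed


section \<open>Left denominator sets\<close>

lemma Den_lD:
  assumes "S \<in> Den_l R a"
  shows "S \<subseteq> carrier R" "\<one>\<^bsub>R\<^esub> \<in> S" "\<zero>\<^bsub>R\<^esub> \<notin> S"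
    "\<And>s t. s \<in> S \<Longrightarrow> t \<in> S \<Longrightarrow> s \<otimes>\<^bsub>R\<^esub> t \<in> S"
    "\<And>r s. r \<in> carrier R \<Longrightarrow> s \<in> S \<Longrightarrow> \<exists>s'\<in>S. \<exists>r'\<in>carrier R. s' \<otimes>\<^bsub>R\<^esub> r = r' \<otimes>\<^bsub>R\<^esub> s"
    "\<And>r s. r \<in> carrier R \<Longrightarrow> s \<in> S \<Longrightarrow> r \<otimes>\<^bsub>R\<^esub> s = \<zero>\<^bsub>R\<^esub> \<Longrightarrow> \<exists>t\<in>S. t \<otimes>\<^bsub>R\<^esub> r = \<zero>\<^bsub>R\<^esub>"
    "ass R S = a"
  using assms unfolding Den_l_def left_den_def left_ore_def mult_closed_def by auto

lemma (in ring) Den_l_zero_regular: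
  assumes "W \<in> Den_l R {\<zero>}" "w \<in> W" "r \<in> carrier R"
  shows "w \<otimes> r = \<zero> \<Longrightarrow> r = \<zero>" and "r \<otimes> w = \<zero> \<Longrightarrow> r = \<zero>"
proof -
  have left: "w' \<otimes> r' = \<zero> \<Longrightarrow> r' = \<zero>" if "w' \<in> W" "r' \<in> carrier R" for w' r'
    using Den_lD(7)[OF assms(1)] that unfolding ass_def by blast
  show "w \<otimes> r = \<zero> \<Longrightarrow> r = \<zero>" using left assms(2,3) .
  show "r \<otimes> w = \<zero> \<Longrightarrow> r = \<zero>" using Den_lD(6)[OF assms(1) assms(3,2)] left assms(3) by blast
qed

lemma (in ring) Den_l_zeroI:
  assumes ore: "left_ore R W"
    and left_regular: "\<And>w r. w \<in> W \<Longrightarrow> r \<in> carrier R \<Longrightarrow> w \<otimes> r = \<zero> \<Longrightarrow> r = \<zero>"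
    and right_regular: "\<And>w r. w \<in> W \<Longrightarrow> r \<in> carrier R \<Longrightarrow> r \<otimes> w = \<zero> \<Longrightarrow> r = \<zero>"
  shows "W \<in> Den_l R {\<zero>}"
proof -
  have "\<one> \<in> W" using ore unfolding left_ore_def mult_closed_def by blast
  then have "ass R W = {\<zero>}" using left_regular unfolding ass_def by force
  moreover have "\<exists>t\<in>W. t \<otimes> r = \<zero>" if "r \<in> carrier R" "w \<in> W" "r \<otimes> w = \<zero>" for r w
    using right_regular[OF that(2,1,3)] \<open>\<one> \<in> W\<close> by (intro bexI[of _ \<one>]) auto
  ultimately show ?thesis using ore unfolding Den_l_def left_den_def by blast
qed

lemma ring_hom_eq_imp_equalized:
  assumes "ring R" "ring B" "h \<in> ring_hom R B" "S \<subseteq> carrier R"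
    and ker: "{r \<in> carrier R. h r = \<zero>\<^bsub>B\<^esub>} = ass R S"
    and "x \<in> carrier R" "y \<in> carrier R" "h x = h y"
  shows "\<exists>t\<in>S. t \<otimes>\<^bsub>R\<^esub> x = t \<otimes>\<^bsub>R\<^esub> y"
proof -
  interpret h: ring_hom_ring R B h using assms by (intro ring_hom_ringI2)
  have "h (x \<ominus>\<^bsub>R\<^esub> y) = \<zero>\<^bsub>B\<^esub>" using assms(6-8) by (simp add: h.R.minus_eq h.S.r_neg)
  then obtain t where t: "t \<in> S" "t \<otimes>\<^bsub>R\<^esub> (x \<ominus>\<^bsub>R\<^esub> y) = \<zero>\<^bsub>R\<^esub>"
    using ker assms(6,7) unfolding ass_def by blast
  moreover have "t \<in> carrier R" using t assms(4) by blast
  ultimately have "t \<otimes>\<^bsub>R\<^esub> x \<ominus>\<^bsub>R\<^esub> t \<otimes>\<^bsub>R\<^esub> y = \<zero>\<^bsub>R\<^esub>"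
    using assms(6,7) by (simp add: h.R.minus_eq h.R.r_distr h.R.r_minus)
  then show ?thesis using t \<open>t \<in> carrier R\<close> assms(6,7) by auto
qed


section \<open>Left rings of fractions and their universal property\<close>

locale left_fraction_ring = R: ring R + Q: ring Q
  for R :: "('a, 'm) ring_scheme" (structure) and Q :: "('b, 'n) ring_scheme" +
  fixes S :: "'a set" and \<sigma> :: "'a \<Rightarrow> 'b"
  assumes ore: "left_ore R S" and loc: "is_left_loc R S Q \<sigma>"
begin

sublocale \<sigma>: ring_hom_ring R Q \<sigma>
  using loc unfolding is_left_loc_def by unfold_locales blast

lemma S_carrier: "s \<in> S \<Longrightarrow> s \<in> carrier R"
  and one_in_S: "\<one> \<in> S"
  and S_mult: "s \<in> S \<Longrightarrow> t \<in> S \<Longrightarrow> s \<otimes> t \<in> S"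
  and ore_condition: "r \<in> carrier R \<Longrightarrow> s \<in> S \<Longrightarrow> \<exists>s'\<in>S. \<exists>r'\<in>carrier R. s' \<otimes> r = r' \<otimes> s"
  using ore unfolding left_ore_def mult_closed_def by auto

lemma sigma_Units: "s \<in> S \<Longrightarrow> \<sigma> s \<in> Units Q"
  and fraction_rep: "q \<in> carrier Q \<Longrightarrow> \<exists>s\<in>S. \<exists>r\<in>carrier R. q = inv\<^bsub>Q\<^esub> (\<sigma> s) \<otimes>\<^bsub>Q\<^esub> \<sigma> r"
  and sigma_kernel: "{r \<in> carrier R. \<sigma> r = \<zero>\<^bsub>Q\<^esub>} = ass R S"
  using loc unfolding is_left_loc_def by auto

lemma sigma_eq_imp_equalized: "x \<in> carrier R \<Longrightarrow> y \<in> carrier R \<Longrightarrow> \<sigma> x = \<sigma> y \<Longrightarrow> \<exists>t\<in>S. t \<otimes> x = t \<otimes> y"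
  using ring_hom_eq_imp_equalized[OF R.ring_axioms Q.ring_axioms \<sigma>.homh _ sigma_kernel] S_carrier by blast

end

locale left_fraction_lift = left_fraction_ring R Q S \<sigma> + P: ring P
  for R :: "('a, 'm) ring_scheme" (structure) and Q :: "('b, 'n) ring_scheme" and S \<sigma>
    and P :: "('c, 'p) ring_scheme" +
  fixes f :: "'a \<Rightarrow> 'c"
  assumes f_hom: "f \<in> ring_hom R P" and f_Units: "s \<in> S \<Longrightarrow> f s \<in> Units P"
begin

sublocale f: ring_hom_ring R P f
  by unfold_locales (rule f_hom)

lemma f_eq_if_sigma_eq:
  assumes "x \<in> carrier R" "y \<in> carrier R" "\<sigma> x = \<sigma> y"
  shows "f x = f y"
proof -
  obtain t where t: "t \<in> S" "t \<otimes> x = t \<otimes> y" using sigma_eq_imp_equalized[OF assms] by blast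
  then have "f t \<otimes>\<^bsub>P\<^esub> f x = f t \<otimes>\<^bsub>P\<^esub> f y"
    using assms S_carrier by (metis f.hom_mult)
  then show ?thesis using f_Units[OF t(1)] assms by simp
qed

lemma lift_well_defined:
  assumes s1: "s1 \<in> S" and s2: "s2 \<in> S" and r1: "r1 \<in> carrier R" and r2: "r2 \<in> carrier R"
    and eq: "inv\<^bsub>Q\<^esub> (\<sigma> s1) \<otimes>\<^bsub>Q\<^esub> \<sigma> r1 = inv\<^bsub>Q\<^esub> (\<sigma> s2) \<otimes>\<^bsub>Q\<^esub> \<sigma> r2"
  shows "inv\<^bsub>P\<^esub> (f s1) \<otimes>\<^bsub>P\<^esub> f r1 = inv\<^bsub>P\<^esub> (f s2) \<otimes>\<^bsub>P\<^esub> f r2"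
proof -
  obtain s' r' where s': "s' \<in> S" and r': "r' \<in> carrier R" and common: "s' \<otimes> s1 = r' \<otimes> s2"
    using ore_condition[OF S_carrier[OF s1] s2] by blast
  have carr: "s1 \<in> carrier R" "s2 \<in> carrier R" "s' \<in> carrier R" using S_carrier s1 s2 s' by auto
  have "\<sigma> s' \<otimes>\<^bsub>Q\<^esub> \<sigma> r1 = \<sigma> r' \<otimes>\<^bsub>Q\<^esub> \<sigma> r2"
    using Q.left_frac_eq_iff[OF sigma_Units[OF s1] sigma_Units[OF s2] sigma_Units[OF s'], of "\<sigma> r'"]
      eq common carr r1 r2 r' by (metis \<sigma>.hom_closed \<sigma>.hom_mult)
  then have "f (s' \<otimes> r1) = f (r' \<otimes> r2)"
    using carr r1 r2 r' by (intro f_eq_if_sigma_eq) auto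
  moreover have "f s' \<otimes>\<^bsub>P\<^esub> f s1 = f r' \<otimes>\<^bsub>P\<^esub> f s2"
    using common carr r' by (metis f.hom_mult)
  ultimately show ?thesis
    using P.left_frac_eq_iff[OF f_Units[OF s1] f_Units[OF s2] f_Units[OF s'], of "f r'"]
      carr r1 r2 r' by simp
qed

definition lift :: "'b \<Rightarrow> 'c" where
  "lift q = (SOME p. \<exists>s\<in>S. \<exists>r\<in>carrier R.
     q = inv\<^bsub>Q\<^esub> (\<sigma> s) \<otimes>\<^bsub>Q\<^esub> \<sigma> r \<and> p = inv\<^bsub>P\<^esub> (f s) \<otimes>\<^bsub>P\<^esub> f r)"

lemma lift_fraction:
  assumes "s \<in> S" "r \<in> carrier R"
  shows "lift (inv\<^bsub>Q\<^esub> (\<sigma> s) \<otimes>\<^bsub>Q\<^esub> \<sigma> r) = inv\<^bsub>P\<^esub> (f s) \<otimes>\<^bsub>P\<^esub> f r"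
proof -
  let ?q = "inv\<^bsub>Q\<^esub> (\<sigma> s) \<otimes>\<^bsub>Q\<^esub> \<sigma> r"
  have "\<exists>s'\<in>S. \<exists>r'\<in>carrier R. ?q = inv\<^bsub>Q\<^esub> (\<sigma> s') \<otimes>\<^bsub>Q\<^esub> \<sigma> r' \<and>
      lift ?q = inv\<^bsub>P\<^esub> (f s') \<otimes>\<^bsub>P\<^esub> f r'"
    unfolding lift_def by (rule someI_ex) (use assms in blast)
  then show ?thesis using lift_well_defined assms by metis
qed

lemma lift_sigma: "r \<in> carrier R \<Longrightarrow> lift (\<sigma> r) = f r"
  using lift_fraction[OF one_in_S] by simp

lemma lift_mult:
  assumes "x \<in> carrier Q" "y \<in> carrier Q"
  shows "lift (x \<otimes>\<^bsub>Q\<^esub> y) = lift x \<otimes>\<^bsub>P\<^esub> lift y"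
proof -
  obtain s1 r1 s2 r2 where s1: "s1 \<in> S" and r1: "r1 \<in> carrier R" and x: "x = inv\<^bsub>Q\<^esub> (\<sigma> s1) \<otimes>\<^bsub>Q\<^esub> \<sigma> r1"
    and s2: "s2 \<in> S" and r2: "r2 \<in> carrier R" and y: "y = inv\<^bsub>Q\<^esub> (\<sigma> s2) \<otimes>\<^bsub>Q\<^esub> \<sigma> r2"
    using fraction_rep assms by meson
  obtain s' r' where s': "s' \<in> S" and r': "r' \<in> carrier R" and swap: "s' \<otimes> r1 = r' \<otimes> s2"
    using ore_condition[OF r1 s2] by blast
  have carr: "s1 \<in> carrier R" "s2 \<in> carrier R" "s' \<in> carrier R" using S_carrier s1 s2 s' by auto
  have "x \<otimes>\<^bsub>Q\<^esub> y = inv\<^bsub>Q\<^esub> (\<sigma> (s' \<otimes> s1)) \<otimes>\<^bsub>Q\<^esub> \<sigma> (r' \<otimes> r2)"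
    using Q.left_frac_mult[OF sigma_Units[OF s1] sigma_Units[OF s2] sigma_Units[OF s']]
      swap x y carr r1 r2 r' by (metis \<sigma>.hom_closed \<sigma>.hom_mult)
  moreover have "inv\<^bsub>P\<^esub> (f (s' \<otimes> s1)) \<otimes>\<^bsub>P\<^esub> f (r' \<otimes> r2) =
      (inv\<^bsub>P\<^esub> (f s1) \<otimes>\<^bsub>P\<^esub> f r1) \<otimes>\<^bsub>P\<^esub> (inv\<^bsub>P\<^esub> (f s2) \<otimes>\<^bsub>P\<^esub> f r2)"
    using P.left_frac_mult[OF f_Units[OF s1] f_Units[OF s2] f_Units[OF s']]
      swap carr r1 r2 r' by (metis f.hom_closed f.hom_mult)
  ultimately show ?thesis
    using lift_fraction[OF S_mult[OF s' s1] R.m_closed[OF r' r2]]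
      lift_fraction[OF s1 r1] lift_fraction[OF s2 r2] x y by simp
qed

lemma lift_add:
  assumes "x \<in> carrier Q" "y \<in> carrier Q"
  shows "lift (x \<oplus>\<^bsub>Q\<^esub> y) = lift x \<oplus>\<^bsub>P\<^esub> lift y"
proof -
  obtain s1 r1 s2 r2 where s1: "s1 \<in> S" and r1: "r1 \<in> carrier R" and x: "x = inv\<^bsub>Q\<^esub> (\<sigma> s1) \<otimes>\<^bsub>Q\<^esub> \<sigma> r1"
    and s2: "s2 \<in> S" and r2: "r2 \<in> carrier R" and y: "y = inv\<^bsub>Q\<^esub> (\<sigma> s2) \<otimes>\<^bsub>Q\<^esub> \<sigma> r2"
    using fraction_rep assms by meson
  have carr: "s1 \<in> carrier R" "s2 \<in> carrier R" using S_carrier s1 s2 by auto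
  obtain s' r' where s': "s' \<in> S" and r': "r' \<in> carrier R" and common: "s' \<otimes> s1 = r' \<otimes> s2"
    using ore_condition[OF carr(1) s2] by blast
  have s'_carr: "s' \<in> carrier R" using S_carrier s' by auto
  have "x \<oplus>\<^bsub>Q\<^esub> y = inv\<^bsub>Q\<^esub> (\<sigma> (s' \<otimes> s1)) \<otimes>\<^bsub>Q\<^esub> \<sigma> (s' \<otimes> r1 \<oplus> r' \<otimes> r2)"
    using Q.left_frac_add[OF sigma_Units[OF s1] sigma_Units[OF s2] sigma_Units[OF s']]
      common x y carr s'_carr r1 r2 r' by (metis \<sigma>.hom_closed \<sigma>.hom_mult \<sigma>.hom_add R.m_closed)
  moreover have "inv\<^bsub>P\<^esub> (f (s' \<otimes> s1)) \<otimes>\<^bsub>P\<^esub> f (s' \<otimes> r1 \<oplus> r' \<otimes> r2) =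
      (inv\<^bsub>P\<^esub> (f s1) \<otimes>\<^bsub>P\<^esub> f r1) \<oplus>\<^bsub>P\<^esub> (inv\<^bsub>P\<^esub> (f s2) \<otimes>\<^bsub>P\<^esub> f r2)"
    using P.left_frac_add[OF f_Units[OF s1] f_Units[OF s2] f_Units[OF s']]
      common carr s'_carr r1 r2 r' by (metis f.hom_closed f.hom_mult f.hom_add R.m_closed)
  ultimately show ?thesis
    using lift_fraction[OF S_mult[OF s' s1] R.add.m_closed[OF R.m_closed[OF s'_carr r1] R.m_closed[OF r' r2]]]
      lift_fraction[OF s1 r1] lift_fraction[OF s2 r2] x y by simp
qed

lemma lift_hom: "lift \<in> ring_hom Q P"
proof (rule ring_hom_memI)
  fix x assume "x \<in> carrier Q"
  then obtain s r where "s \<in> S" "r \<in> carrier R" "x = inv\<^bsub>Q\<^esub> (\<sigma> s) \<otimes>\<^bsub>Q\<^esub> \<sigma> r"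
    using fraction_rep by blast
  then show "lift x \<in> carrier P" using lift_fraction f_Units by simp
qed (simp_all add: lift_mult lift_add lift_sigma[OF R.one_closed, simplified])

end

lemma left_loc_universal:
  assumes "ring R" "ring P" "left_ore R S" "is_left_loc R S Q \<sigma>"
    and "f \<in> ring_hom R P" "\<And>s. s \<in> S \<Longrightarrow> f s \<in> Units P"
  obtains \<phi> where "\<phi> \<in> ring_hom Q P" "\<And>r. r \<in> carrier R \<Longrightarrow> \<phi> (\<sigma> r) = f r"
proof -
  interpret left_fraction_lift R Q S \<sigma> P f
    unfolding left_fraction_lift_def left_fraction_ring_def left_fraction_lift_axioms_def
      left_fraction_ring_axioms_def
    using assms by (auto simp: is_left_loc_def)
  show ?thesis using that lift_hom lift_sigma by blast
qed

lemma left_loc_hom_inj_on: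
  assumes "ring P" "is_left_loc R S Q \<sigma>" "\<phi> \<in> ring_hom Q P"
    and kernel: "\<And>r. r \<in> carrier R \<Longrightarrow> \<phi> (\<sigma> r) = \<zero>\<^bsub>P\<^esub> \<Longrightarrow> \<sigma> r = \<zero>\<^bsub>Q\<^esub>"
  shows "inj_on \<phi> (carrier Q)"
proof -
  have Q: "ring Q" and \<sigma>: "\<sigma> \<in> ring_hom R Q" using assms(2) unfolding is_left_loc_def by auto
  interpret \<phi>: ring_hom_ring Q P \<phi> using Q assms by (intro ring_hom_ringI2)
  have "x = \<zero>\<^bsub>Q\<^esub>" if x: "x \<in> carrier Q" "\<phi> x = \<zero>\<^bsub>P\<^esub>" for x
  proof -
    obtain s r where s: "\<sigma> s \<in> Units Q" and r: "r \<in> carrier R"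
      and x_eq: "x = inv\<^bsub>Q\<^esub> (\<sigma> s) \<otimes>\<^bsub>Q\<^esub> \<sigma> r"
      using assms(2) x(1) unfolding is_left_loc_def by blast
    have \<sigma>r: "\<sigma> r \<in> carrier Q" using ring_hom_closed[OF \<sigma> r] .
    have "inv\<^bsub>P\<^esub> (\<phi> (\<sigma> s)) \<otimes>\<^bsub>P\<^esub> \<phi> (\<sigma> r) = \<zero>\<^bsub>P\<^esub>"
      using x x_eq ring_hom_left_frac[OF Q assms(1,3) s \<sigma>r] by simp
    then have "\<phi> (\<sigma> r) = \<zero>\<^bsub>P\<^esub>"
      using ring_hom_Units[OF Q assms(1,3) s] \<sigma>r by (simp add: \<phi>.S.Units_inv_mult_eq_iff \<phi>.S.Units_closed)
    then show ?thesis using kernel[OF r] x_eq s by simp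
  qed
  then have "a_kernel Q P \<phi> = {\<zero>\<^bsub>Q\<^esub>}" unfolding a_kernel_def' by auto
  then show ?thesis using \<phi>.inj_iff_trivial_ker by blast
qed

lemma left_loc_hom_iso:
  assumes "ring P" "is_left_loc R S Q \<sigma>" "\<phi> \<in> ring_hom Q P"
    and kernel: "\<And>r. r \<in> carrier R \<Longrightarrow> \<phi> (\<sigma> r) = \<zero>\<^bsub>P\<^esub> \<Longrightarrow> \<sigma> r = \<zero>\<^bsub>Q\<^esub>"
    and fractions: "\<And>p. p \<in> carrier P \<Longrightarrow> \<exists>u\<in>Units Q. \<exists>x\<in>carrier Q. p = inv\<^bsub>P\<^esub> (\<phi> u) \<otimes>\<^bsub>P\<^esub> \<phi> x"
  shows "\<phi> \<in> ring_iso Q P"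
proof -
  have Q: "ring Q" using assms(2) unfolding is_left_loc_def by auto
  interpret Q: ring Q by (rule Q)
  have "carrier P \<subseteq> \<phi> ` carrier Q"
  proof
    fix p assume "p \<in> carrier P"
    then obtain u x where u: "u \<in> Units Q" and x: "x \<in> carrier Q" and p: "p = inv\<^bsub>P\<^esub> (\<phi> u) \<otimes>\<^bsub>P\<^esub> \<phi> x"
      using fractions by blast
    then have "p = \<phi> (inv\<^bsub>Q\<^esub> u \<otimes>\<^bsub>Q\<^esub> x)" using ring_hom_left_frac[OF Q assms(1,3) u x] by simp
    moreover have "inv\<^bsub>Q\<^esub> u \<otimes>\<^bsub>Q\<^esub> x \<in> carrier Q" using u x by simp
    ultimately show "p \<in> \<phi> ` carrier Q" by blast
  qed
  then have "bij_betw \<phi> (carrier Q) (carrier P)"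
    using left_loc_hom_inj_on[OF assms(1-3) kernel] ring_hom_closed[OF assms(3)]
    unfolding bij_betw_def by blast
  then show ?thesis using assms(3) unfolding ring_iso_def by blast
qed


section \<open>Preimages of left denominator sets\<close>

text \<open>Covers both \<open>\<sigma> : R \<rightarrow> S\<inverse>R\<close> and the quotient map \<open>R \<rightarrow> R/ass(S)\<close>.\<close>

locale den_preimage = R: ring R + B: ring B
  for R :: "('a, 'm) ring_scheme" (structure) and B :: "('b, 'n) ring_scheme" +
  fixes h :: "'a \<Rightarrow> 'b" and S :: "'a set" and U :: "'b set"
  assumes hom: "h \<in> ring_hom R B"
    and S_carrier: "S \<subseteq> carrier R"
    and kernel: "{r \<in> carrier R. h r = \<zero>\<^bsub>B\<^esub>} = ass R S"
    and U_den: "U \<in> Den_l B {\<zero>\<^bsub>B\<^esub>}"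
    and image_S: "h ` S \<subseteq> U"
    and clear_denominators: "b \<in> carrier B \<Longrightarrow> \<exists>s\<in>S. \<exists>r\<in>carrier R. h s \<otimes>\<^bsub>B\<^esub> b = h r"
begin

sublocale h: ring_hom_ring R B h
  by unfold_locales (rule hom)

abbreviation preimage :: "'a set" where
  "preimage \<equiv> {r \<in> carrier R. h r \<in> U}"

lemmas U_carrier = Den_lD(1)[OF U_den, THEN subsetD]
  and U_one = Den_lD(2)[OF U_den]
  and U_zero = Den_lD(3)[OF U_den]
  and U_mult = Den_lD(4)[OF U_den]
  and U_ore = Den_lD(5)[OF U_den]
  and U_den_cond = Den_lD(6)[OF U_den]

lemma U_regular: "u \<in> U \<Longrightarrow> b \<in> carrier B \<Longrightarrow> u \<otimes>\<^bsub>B\<^esub> b = \<zero>\<^bsub>B\<^esub> \<Longrightarrow> b = \<zero>\<^bsub>B\<^esub>"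
  using Den_lD(7)[OF U_den] unfolding ass_def by blast

lemma S_sub_preimage: "S \<subseteq> preimage"
  using S_carrier image_S by blast

lemma preimage_mult: "x \<in> preimage \<Longrightarrow> y \<in> preimage \<Longrightarrow> x \<otimes> y \<in> preimage"
  by (auto intro: U_mult)

lemma h_eq_imp_equalized: "x \<in> carrier R \<Longrightarrow> y \<in> carrier R \<Longrightarrow> h x = h y \<Longrightarrow> \<exists>t\<in>S. t \<otimes> x = t \<otimes> y"
  using ring_hom_eq_imp_equalized[OF R.ring_axioms B.ring_axioms hom S_carrier kernel] by blast

lemma U_clear_denominator:
  assumes "u \<in> U"
  obtains s t where "s \<in> S" "t \<in> preimage" "h s \<otimes>\<^bsub>B\<^esub> u = h t"
proof -
  obtain s t where "s \<in> S" "t \<in> carrier R" "h s \<otimes>\<^bsub>B\<^esub> u = h t"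
    using clear_denominators U_carrier assms by blast
  moreover then have "h t \<in> U" using image_S assms by (metis U_mult image_subset_iff)
  ultimately show ?thesis using that by blast
qed

lemma preimage_mult_closed: "mult_closed R preimage"
  unfolding mult_closed_def using U_one U_zero preimage_mult by auto

lemma preimage_ore:
  assumes r: "r \<in> carrier R" and t: "t \<in> preimage"
  shows "\<exists>t'\<in>preimage. \<exists>r'\<in>carrier R. t' \<otimes> r = r' \<otimes> t"
proof -
  obtain u b where u: "u \<in> U" and b: "b \<in> carrier B" and swap: "u \<otimes>\<^bsub>B\<^esub> h r = b \<otimes>\<^bsub>B\<^esub> h t"
    using U_ore[of "h r" "h t"] r t by auto
  obtain s t1 where s: "s \<in> S" and t1: "t1 \<in> preimage" and t1_eq: "h s \<otimes>\<^bsub>B\<^esub> u = h t1"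
    using U_clear_denominator[OF u] .
  have "h s \<otimes>\<^bsub>B\<^esub> b \<in> carrier B" using s b S_carrier by auto
  then obtain s2 r2 where s2: "s2 \<in> S" and r2: "r2 \<in> carrier R" and r2_eq: "h s2 \<otimes>\<^bsub>B\<^esub> (h s \<otimes>\<^bsub>B\<^esub> b) = h r2"
    using clear_denominators by blast
  have carr: "s \<in> carrier R" "s2 \<in> carrier R" "t \<in> carrier R" "t1 \<in> carrier R"
    using s s2 t t1 S_carrier by auto
  have hcarr: "h s \<in> carrier B" "h s2 \<in> carrier B" "h r \<in> carrier B" "h t \<in> carrier B" "u \<in> carrier B"
    using carr r u U_carrier by auto
  have "h (s2 \<otimes> t1 \<otimes> r) = h s2 \<otimes>\<^bsub>B\<^esub> (h s \<otimes>\<^bsub>B\<^esub> u) \<otimes>\<^bsub>B\<^esub> h r"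
    using t1_eq carr r by simp
  also have "\<dots> = h s2 \<otimes>\<^bsub>B\<^esub> h s \<otimes>\<^bsub>B\<^esub> (u \<otimes>\<^bsub>B\<^esub> h r)"
    using hcarr by (simp add: B.m_assoc)
  also have "\<dots> = h s2 \<otimes>\<^bsub>B\<^esub> (h s \<otimes>\<^bsub>B\<^esub> b) \<otimes>\<^bsub>B\<^esub> h t"
    using swap hcarr b by (simp add: B.m_assoc)
  also have "\<dots> = h (r2 \<otimes> t)" using r2_eq carr r2 by simp
  finally have "\<exists>s3\<in>S. s3 \<otimes> (s2 \<otimes> t1 \<otimes> r) = s3 \<otimes> (r2 \<otimes> t)"
    using carr r r2 by (intro h_eq_imp_equalized) auto
  then obtain s3 where s3: "s3 \<in> S" and eq: "s3 \<otimes> (s2 \<otimes> t1 \<otimes> r) = s3 \<otimes> (r2 \<otimes> t)"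
    by blast
  have s3_carr: "s3 \<in> carrier R" using s3 S_carrier by blast
  have "s3 \<otimes> s2 \<otimes> t1 \<in> preimage"
    using preimage_mult S_sub_preimage s3 s2 t1 by blast
  moreover have "s3 \<otimes> s2 \<otimes> t1 \<otimes> r = (s3 \<otimes> r2) \<otimes> t"
    using eq carr s3_carr r r2 by (simp add: R.m_assoc)
  moreover have "s3 \<otimes> r2 \<in> carrier R" using s3_carr r2 by simp
  ultimately show ?thesis by blast
qed

lemma preimage_den_cond:
  assumes r: "r \<in> carrier R" and t: "t \<in> preimage" and zero: "r \<otimes> t = \<zero>"
  shows "\<exists>t'\<in>preimage. t' \<otimes> r = \<zero>"
proof -
  have t_carr: "t \<in> carrier R" using t by blast
  have "h r \<otimes>\<^bsub>B\<^esub> h t = \<zero>\<^bsub>B\<^esub>" using zero r t_carr by (metis h.hom_mult h.hom_zero)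
  then obtain u where u: "u \<in> U" and u_r: "u \<otimes>\<^bsub>B\<^esub> h r = \<zero>\<^bsub>B\<^esub>"
    using U_den_cond[of "h r" "h t"] r t by auto
  obtain s t1 where s: "s \<in> S" and t1: "t1 \<in> preimage" and t1_eq: "h s \<otimes>\<^bsub>B\<^esub> u = h t1"
    using U_clear_denominator[OF u] .
  have carr: "s \<in> carrier R" "t1 \<in> carrier R" using s t1 S_carrier by auto
  have "h (t1 \<otimes> r) = h s \<otimes>\<^bsub>B\<^esub> u \<otimes>\<^bsub>B\<^esub> h r" using t1_eq carr r by simp
  also have "\<dots> = \<zero>\<^bsub>B\<^esub>" using u_r carr r u U_carrier by (simp add: B.m_assoc)
  finally have "t1 \<otimes> r \<in> {x \<in> carrier R. h x = \<zero>\<^bsub>B\<^esub>}" using carr r by simp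
  then have "t1 \<otimes> r \<in> ass R S" using kernel by simp
  then obtain s' where s': "s' \<in> S" and "s' \<otimes> (t1 \<otimes> r) = \<zero>"
    unfolding ass_def by blast
  moreover have "s' \<in> carrier R" using s' S_carrier by blast
  ultimately have "(s' \<otimes> t1) \<otimes> r = \<zero>" using r carr by (simp add: R.m_assoc)
  moreover have "s' \<otimes> t1 \<in> preimage" using preimage_mult S_sub_preimage s' t1 by blast
  ultimately show ?thesis by blast
qed

lemma preimage_ass: "ass R preimage = ass R S"
proof
  show "ass R preimage \<subseteq> ass R S"
  proof
    fix r assume "r \<in> ass R preimage"
    then obtain t where r: "r \<in> carrier R" and t: "t \<in> preimage" and "t \<otimes> r = \<zero>"
      unfolding ass_def by blast
    then have "h t \<otimes>\<^bsub>B\<^esub> h r = \<zero>\<^bsub>B\<^esub>" by (metis (mono_tags) h.hom_mult h.hom_zero mem_Collect_eq)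
    then have "h r = \<zero>\<^bsub>B\<^esub>" using U_regular[of "h t" "h r"] t r by auto
    then show "r \<in> ass R S" using kernel r by blast
  qed
  show "ass R S \<subseteq> ass R preimage"
    using S_sub_preimage unfolding ass_def by blast
qed

lemma preimage_in_Den_l: "preimage \<in> Den_l R (ass R S)"
  using preimage_mult_closed preimage_ore preimage_den_cond preimage_ass
  unfolding Den_l_def left_den_def left_ore_def by blast

end


section \<open>Localizing a ring of fractions once more\<close>

locale left_fraction_tower = left_fraction_ring R Q S \<sigma>
  for R :: "('a, 'm) ring_scheme" (structure) and Q :: "('b, 'n) ring_scheme" and S \<sigma> +
  fixes T :: "'b set"
  assumes T_den: "T \<in> Den_l Q {\<zero>\<^bsub>Q\<^esub>}"
    and sigma_S_sub: "\<sigma> ` S \<subseteq> T"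
    and inv_sigma_S_sub: "{inv\<^bsub>Q\<^esub> (\<sigma> s) | s. s \<in> S} \<subseteq> T"
begin

sublocale pre: den_preimage R Q \<sigma> S T
proof
  show "S \<subseteq> carrier R" using S_carrier by blast
  fix q assume "q \<in> carrier Q"
  then obtain s r where "s \<in> S" "r \<in> carrier R" "q = inv\<^bsub>Q\<^esub> (\<sigma> s) \<otimes>\<^bsub>Q\<^esub> \<sigma> r"
    using fraction_rep by blast
  then show "\<exists>s\<in>S. \<exists>r\<in>carrier R. \<sigma> s \<otimes>\<^bsub>Q\<^esub> q = \<sigma> r"
    using sigma_Units by (metis Q.Units_mult_inv_cancel \<sigma>.hom_closed)
qed (use \<sigma>.homh sigma_kernel T_den sigma_S_sub in auto)

lemma preimage_S_saturated: "S_saturated R S pre.preimage"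
  unfolding S_saturated_def
proof (intro conjI ballI impI)
  fix s r assume s: "s \<in> S" and r: "r \<in> carrier R" and "s \<otimes> r \<in> pre.preimage"
  then have "\<sigma> s \<otimes>\<^bsub>Q\<^esub> \<sigma> r \<in> T" using S_carrier by simp
  then have "inv\<^bsub>Q\<^esub> (\<sigma> s) \<otimes>\<^bsub>Q\<^esub> (\<sigma> s \<otimes>\<^bsub>Q\<^esub> \<sigma> r) \<in> T"
    using pre.U_mult inv_sigma_S_sub s by blast
  then show "r \<in> pre.preimage" using s r sigma_Units by simp
next
  fix s r assume s: "s \<in> S" and r: "r \<in> carrier R" and "r \<otimes> s \<in> pre.preimage"
  then have "\<sigma> r \<otimes>\<^bsub>Q\<^esub> \<sigma> s \<in> T" using S_carrier by simp
  then have "\<sigma> r \<otimes>\<^bsub>Q\<^esub> \<sigma> s \<otimes>\<^bsub>Q\<^esub> inv\<^bsub>Q\<^esub> (\<sigma> s) \<in> T"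
    using pre.U_mult inv_sigma_S_sub s by blast
  then show "r \<in> pre.preimage"
    using s r sigma_Units by (simp add: Q.m_assoc Q.Units_closed)
qed

lemma T_fractions: "T = {inv\<^bsub>Q\<^esub> (\<sigma> s) \<otimes>\<^bsub>Q\<^esub> \<sigma> t' | s t'. s \<in> S \<and> t' \<in> pre.preimage}"
proof
  show "T \<subseteq> {inv\<^bsub>Q\<^esub> (\<sigma> s) \<otimes>\<^bsub>Q\<^esub> \<sigma> t' | s t'. s \<in> S \<and> t' \<in> pre.preimage}"
  proof
    fix t assume t: "t \<in> T"
    then obtain s r where s: "s \<in> S" and r: "r \<in> carrier R" and t_eq: "t = inv\<^bsub>Q\<^esub> (\<sigma> s) \<otimes>\<^bsub>Q\<^esub> \<sigma> r"
      using fraction_rep pre.U_carrier by blast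
    then have "\<sigma> r = \<sigma> s \<otimes>\<^bsub>Q\<^esub> t"
      using sigma_Units by (simp add: Q.Units_inv_mult_eq_iff)
    then have "\<sigma> r \<in> T" using pre.U_mult sigma_S_sub s t by auto
    then show "t \<in> {inv\<^bsub>Q\<^esub> (\<sigma> s) \<otimes>\<^bsub>Q\<^esub> \<sigma> t' | s t'. s \<in> S \<and> t' \<in> pre.preimage}"
      using s r t_eq by blast
  qed
  show "{inv\<^bsub>Q\<^esub> (\<sigma> s) \<otimes>\<^bsub>Q\<^esub> \<sigma> t' | s t'. s \<in> S \<and> t' \<in> pre.preimage} \<subseteq> T"
    using pre.U_mult inv_sigma_S_sub by blast
qed

lemma preimage_left_ore: "left_ore R pre.preimage"
  using pre.preimage_in_Den_l unfolding Den_l_def left_den_def by blast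

lemma lift_into_preimage_loc:
  assumes loc1: "is_left_loc R pre.preimage Q1 \<sigma>1"
  shows "\<exists>\<phi>. \<phi> \<in> ring_hom Q Q1 \<and> (\<forall>r\<in>carrier R. \<phi> (\<sigma> r) = \<sigma>1 r) \<and> inj_on \<phi> (carrier Q)"
proof -
  have Q1: "ring Q1" and \<sigma>1: "\<sigma>1 \<in> ring_hom R Q1"
    and units1: "\<And>t. t \<in> pre.preimage \<Longrightarrow> \<sigma>1 t \<in> Units Q1"
    and kernel1: "{r \<in> carrier R. \<sigma>1 r = \<zero>\<^bsub>Q1\<^esub>} = ass R S"
    using loc1 pre.preimage_ass unfolding is_left_loc_def by auto
  have "\<sigma>1 s \<in> Units Q1" if "s \<in> S" for s using units1 pre.S_sub_preimage that by blast
  then obtain \<phi> where \<phi>: "\<phi> \<in> ring_hom Q Q1" and \<phi>_\<sigma>: "\<And>r. r \<in> carrier R \<Longrightarrow> \<phi> (\<sigma> r) = \<sigma>1 r"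
    using left_loc_universal[OF R.ring_axioms Q1 ore loc \<sigma>1] by metis
  have "\<sigma> r = \<zero>\<^bsub>Q\<^esub>" if r: "r \<in> carrier R" and "\<phi> (\<sigma> r) = \<zero>\<^bsub>Q1\<^esub>" for r
  proof -
    have "r \<in> ass R S" using that \<phi>_\<sigma> kernel1 by auto
    then show ?thesis using sigma_kernel by blast
  qed
  then have "inj_on \<phi> (carrier Q)" using left_loc_hom_inj_on[OF Q1 loc \<phi>] by blast
  then show ?thesis using \<phi> \<phi>_\<sigma> by blast
qed

lemma tower_fraction_transfer:
  assumes loc1: "is_left_loc R pre.preimage Q1 \<sigma>1" and Q2: "ring Q2" and \<tau>: "\<tau> \<in> ring_hom Q Q2"
    and \<psi>: "\<psi> \<in> ring_hom Q1 Q2" and \<psi>_\<sigma>1: "\<And>r. r \<in> carrier R \<Longrightarrow> \<psi> (\<sigma>1 r) = \<tau> (\<sigma> r)"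
    and s: "s \<in> S" and r: "r \<in> carrier R"
  shows "\<tau> (inv\<^bsub>Q\<^esub> (\<sigma> s) \<otimes>\<^bsub>Q\<^esub> \<sigma> r) = \<psi> (inv\<^bsub>Q1\<^esub> (\<sigma>1 s) \<otimes>\<^bsub>Q1\<^esub> \<sigma>1 r)"
proof -
  have Q1: "ring Q1" and \<sigma>1: "\<sigma>1 \<in> ring_hom R Q1" and "\<sigma>1 s \<in> Units Q1"
    using loc1 s pre.S_sub_preimage unfolding is_left_loc_def by auto
  have "\<tau> (inv\<^bsub>Q\<^esub> (\<sigma> s) \<otimes>\<^bsub>Q\<^esub> \<sigma> r) = inv\<^bsub>Q2\<^esub> (\<tau> (\<sigma> s)) \<otimes>\<^bsub>Q2\<^esub> \<tau> (\<sigma> r)"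
    using ring_hom_left_frac[OF Q.ring_axioms Q2 \<tau> sigma_Units[OF s]] r by simp
  also have "\<dots> = inv\<^bsub>Q2\<^esub> (\<psi> (\<sigma>1 s)) \<otimes>\<^bsub>Q2\<^esub> \<psi> (\<sigma>1 r)"
    using \<psi>_\<sigma>1 s r S_carrier by simp
  also have "\<dots> = \<psi> (inv\<^bsub>Q1\<^esub> (\<sigma>1 s) \<otimes>\<^bsub>Q1\<^esub> \<sigma>1 r)"
    using ring_hom_left_frac[OF Q1 Q2 \<psi> \<open>\<sigma>1 s \<in> Units Q1\<close>] ring_hom_closed[OF \<sigma>1 r] by simp
  finally show ?thesis .
qed

lemma preimage_loc_iso:
  assumes loc1: "is_left_loc R pre.preimage Q1 \<sigma>1" and loc2: "is_left_loc Q T Q2 \<tau>"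
  shows "\<exists>\<psi>. \<psi> \<in> ring_iso Q1 Q2 \<and> (\<forall>r\<in>carrier R. \<psi> (\<sigma>1 r) = \<tau> (\<sigma> r))"
proof -
  have Q1: "ring Q1" and \<sigma>1: "\<sigma>1 \<in> ring_hom R Q1"
    and units1: "\<And>t. t \<in> pre.preimage \<Longrightarrow> \<sigma>1 t \<in> Units Q1"
    and kernel1: "{r \<in> carrier R. \<sigma>1 r = \<zero>\<^bsub>Q1\<^esub>} = ass R S"
    using loc1 pre.preimage_ass unfolding is_left_loc_def by auto
  have Q2: "ring Q2" and \<tau>: "\<tau> \<in> ring_hom Q Q2" and units2: "\<And>t. t \<in> T \<Longrightarrow> \<tau> t \<in> Units Q2"
    and fractions2: "\<And>p. p \<in> carrier Q2 \<Longrightarrow> \<exists>t\<in>T. \<exists>q\<in>carrier Q. p = inv\<^bsub>Q2\<^esub> (\<tau> t) \<otimes>\<^bsub>Q2\<^esub> \<tau> q"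
    and kernel2: "{q \<in> carrier Q. \<tau> q = \<zero>\<^bsub>Q2\<^esub>} = {\<zero>\<^bsub>Q\<^esub>}"
    using loc2 Den_lD(7)[OF T_den] unfolding is_left_loc_def by auto
  interpret Q1: ring Q1 by (rule Q1)
  have \<tau>\<sigma>: "\<tau> \<circ> \<sigma> \<in> ring_hom R Q2" using ring_hom_trans[OF \<sigma>.homh \<tau>] .
  obtain \<psi> where \<psi>: "\<psi> \<in> ring_hom Q1 Q2" and \<psi>_\<sigma>1: "\<And>r. r \<in> carrier R \<Longrightarrow> \<psi> (\<sigma>1 r) = \<tau> (\<sigma> r)"
    using left_loc_universal[OF R.ring_axioms Q2 preimage_left_ore loc1 \<tau>\<sigma>] units2 by auto
  note transfer = tower_fraction_transfer[OF loc1 Q2 \<tau> \<psi> \<psi>_\<sigma>1]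
  have "\<sigma>1 r = \<zero>\<^bsub>Q1\<^esub>" if r: "r \<in> carrier R" and "\<psi> (\<sigma>1 r) = \<zero>\<^bsub>Q2\<^esub>" for r
  proof -
    have "\<sigma> r \<in> {q \<in> carrier Q. \<tau> q = \<zero>\<^bsub>Q2\<^esub>}" using that \<psi>_\<sigma>1 by simp
    then have "r \<in> ass R S" using kernel2 sigma_kernel r by blast
    then show ?thesis using kernel1 by blast
  qed
  moreover have "\<exists>u\<in>Units Q1. \<exists>x\<in>carrier Q1. p = inv\<^bsub>Q2\<^esub> (\<psi> u) \<otimes>\<^bsub>Q2\<^esub> \<psi> x"
    if "p \<in> carrier Q2" for p
  proof -
    obtain t q where t: "t \<in> T" and q: "q \<in> carrier Q" and p: "p = inv\<^bsub>Q2\<^esub> (\<tau> t) \<otimes>\<^bsub>Q2\<^esub> \<tau> q"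
      using fractions2 \<open>p \<in> carrier Q2\<close> by blast
    obtain s t1 where s: "s \<in> S" and t1: "t1 \<in> pre.preimage" and t_eq: "t = inv\<^bsub>Q\<^esub> (\<sigma> s) \<otimes>\<^bsub>Q\<^esub> \<sigma> t1"
      using t T_fractions by blast
    obtain s2 r where s2: "s2 \<in> S" and r: "r \<in> carrier R" and q_eq: "q = inv\<^bsub>Q\<^esub> (\<sigma> s2) \<otimes>\<^bsub>Q\<^esub> \<sigma> r"
      using q fraction_rep by blast
    have "inv\<^bsub>Q1\<^esub> (\<sigma>1 s) \<otimes>\<^bsub>Q1\<^esub> \<sigma>1 t1 \<in> Units Q1"
      using units1[OF t1] units1[of s] s pre.S_sub_preimage by auto
    moreover have "inv\<^bsub>Q1\<^esub> (\<sigma>1 s2) \<otimes>\<^bsub>Q1\<^esub> \<sigma>1 r \<in> carrier Q1"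
      using units1[of s2] s2 pre.S_sub_preimage ring_hom_closed[OF \<sigma>1 r] by auto
    ultimately show ?thesis
      using p t_eq q_eq transfer s t1 s2 r by auto
  qed
  ultimately have "\<psi> \<in> ring_iso Q1 Q2" using left_loc_hom_iso[OF Q2 loc1 \<psi>] by blast
  then show ?thesis using \<psi>_\<sigma>1 by blast
qed

end


section \<open>The largest left denominator set with trivial \<open>ass\<close>\<close>

inductive_set submonoid_closure :: "('a, 'm) ring_scheme \<Rightarrow> 'a set \<Rightarrow> 'a set" for A U where
  one: "\<one>\<^bsub>A\<^esub> \<in> submonoid_closure A U"
| mult: "u \<in> U \<Longrightarrow> w \<in> submonoid_closure A U \<Longrightarrow> u \<otimes>\<^bsub>A\<^esub> w \<in> submonoid_closure A U"

context ring
begin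

lemma submonoid_closure_carrier:
  assumes "U \<subseteq> carrier R" "w \<in> submonoid_closure R U"
  shows "w \<in> carrier R"
  using assms(2) by induction (use assms(1) in auto)

lemma submonoid_closure_superset:
  assumes "U \<subseteq> carrier R"
  shows "U \<subseteq> submonoid_closure R U"
proof
  fix u assume "u \<in> U"
  then have "u \<otimes> \<one> \<in> submonoid_closure R U" by (rule submonoid_closure.mult[OF _ submonoid_closure.one])
  then show "u \<in> submonoid_closure R U" using \<open>u \<in> U\<close> assms by auto
qed

lemma submonoid_closure_mult:
  assumes "U \<subseteq> carrier R" "w \<in> submonoid_closure R U" "v \<in> submonoid_closure R U"
  shows "w \<otimes> v \<in> submonoid_closure R U"
  using assms(2)
proof (induction rule: submonoid_closure.induct)
  case one
  then show ?case using submonoid_closure_carrier[OF assms(1,3)] assms(3) by simp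
next
  case (mult u w)
  then have "u \<otimes> w \<otimes> v = u \<otimes> (w \<otimes> v)"
    using assms(1) submonoid_closure_carrier[OF assms(1)] assms(3) by (auto intro: m_assoc)
  then show ?case using submonoid_closure.mult[OF mult.hyps(1) mult.IH] by simp
qed

lemma submonoid_closure_left_regular:
  assumes "U \<subseteq> carrier R" and regular: "\<And>u r. u \<in> U \<Longrightarrow> r \<in> carrier R \<Longrightarrow> u \<otimes> r = \<zero> \<Longrightarrow> r = \<zero>"
    and "w \<in> submonoid_closure R U"
  shows "r \<in> carrier R \<Longrightarrow> w \<otimes> r = \<zero> \<Longrightarrow> r = \<zero>"
  using assms(3)
proof (induction arbitrary: r rule: submonoid_closure.induct)
  case (mult u w)
  have "w \<in> carrier R" "u \<in> carrier R"
    using mult.hyps assms(1) submonoid_closure_carrier[OF assms(1)] by auto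
  then have "u \<otimes> (w \<otimes> r) = \<zero>" using mult.prems by (simp add: m_assoc)
  then have "w \<otimes> r = \<zero>"
    by (rule regular[OF mult.hyps(1), rotated]) (use mult.prems(1) \<open>w \<in> carrier R\<close> in simp)
  then show ?case using mult.IH mult.prems(1) by blast
qed simp

lemma submonoid_closure_right_regular:
  assumes "U \<subseteq> carrier R" and regular: "\<And>u r. u \<in> U \<Longrightarrow> r \<in> carrier R \<Longrightarrow> r \<otimes> u = \<zero> \<Longrightarrow> r = \<zero>"
    and "w \<in> submonoid_closure R U"
  shows "r \<in> carrier R \<Longrightarrow> r \<otimes> w = \<zero> \<Longrightarrow> r = \<zero>"
  using assms(3)
proof (induction arbitrary: r rule: submonoid_closure.induct)
  case (mult u w)
  have "w \<in> carrier R" "u \<in> carrier R"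
    using mult.hyps assms(1) submonoid_closure_carrier[OF assms(1)] by auto
  then have "(r \<otimes> u) \<otimes> w = \<zero>" using mult.prems by (simp add: m_assoc)
  then have "r \<otimes> u = \<zero>"
    by (rule mult.IH[rotated]) (use mult.prems(1) \<open>u \<in> carrier R\<close> in simp)
  then show ?case using regular[OF mult.hyps(1)] mult.prems(1) by blast
qed simp

lemma submonoid_closure_ore:
  assumes "U \<subseteq> carrier R"
    and ore: "\<And>u r. u \<in> U \<Longrightarrow> r \<in> carrier R \<Longrightarrow> \<exists>u'\<in>U. \<exists>r'\<in>carrier R. u' \<otimes> r = r' \<otimes> u"
    and "w \<in> submonoid_closure R U"
  shows "r \<in> carrier R \<Longrightarrow> \<exists>w'\<in>submonoid_closure R U. \<exists>r'\<in>carrier R. w' \<otimes> r = r' \<otimes> w"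
  using assms(3)
proof (induction arbitrary: r rule: submonoid_closure.induct)
  case one
  then have "\<one> \<otimes> r = r \<otimes> \<one>" by simp
  then show ?case using submonoid_closure.one[of R U] one by blast
next
  case (mult u w)
  obtain w' r1 where w': "w' \<in> submonoid_closure R U" and r1: "r1 \<in> carrier R"
    and swap1: "w' \<otimes> r = r1 \<otimes> w"
    using mult.IH[OF mult.prems] by blast
  obtain u' r2 where u': "u' \<in> U" and r2: "r2 \<in> carrier R" and swap2: "u' \<otimes> r1 = r2 \<otimes> u"
    using ore[OF mult.hyps(1) r1] by blast
  have carr: "u \<in> carrier R" "w \<in> carrier R" "u' \<in> carrier R" "w' \<in> carrier R"
    using mult.hyps u' w' assms(1) submonoid_closure_carrier[OF assms(1)] by auto
  have "(u' \<otimes> w') \<otimes> r = (u' \<otimes> r1) \<otimes> w"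
    using swap1 carr r1 mult.prems by (simp add: m_assoc)
  also have "\<dots> = r2 \<otimes> (u \<otimes> w)"
    using swap2 carr r2 by (simp add: m_assoc)
  finally show ?case using submonoid_closure.mult[OF u' w'] r2 by blast
qed

theorem S0_greatest:
  assumes "\<one> \<noteq> \<zero>"
  shows "S0 R \<in> Den_l R {\<zero>}" and "S' \<in> Den_l R {\<zero>} \<Longrightarrow> S' \<subseteq> S0 R"
proof -
  define U where "U = \<Union>(Den_l R {\<zero>})"
  define W where "W = submonoid_closure R U"
  have U: "U \<subseteq> carrier R" unfolding U_def using Den_lD(1) by blast
  have U_left_regular: "r = \<zero>" if "u \<in> U" "r \<in> carrier R" "u \<otimes> r = \<zero>" for u r
    using that Den_l_zero_regular(1) unfolding U_def by blast
  have U_right_regular: "r = \<zero>" if "u \<in> U" "r \<in> carrier R" "r \<otimes> u = \<zero>" for u r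
    using that Den_l_zero_regular(2) unfolding U_def by blast
  have U_ore: "\<exists>u'\<in>U. \<exists>r'\<in>carrier R. u' \<otimes> r = r' \<otimes> u" if u: "u \<in> U" and r: "r \<in> carrier R" for u r
  proof -
    obtain S' where S': "S' \<in> Den_l R {\<zero>}" "u \<in> S'" using u unfolding U_def by blast
    then obtain u' r' where "u' \<in> S'" "r' \<in> carrier R" "u' \<otimes> r = r' \<otimes> u" using Den_lD(5)[OF S'(1) r] by blast
    then show ?thesis using S'(1) unfolding U_def by blast
  qed
  have W_left_regular: "r = \<zero>" if "w \<in> W" "r \<in> carrier R" "w \<otimes> r = \<zero>" for w r
    using submonoid_closure_left_regular[OF U, of w r] U_left_regular that unfolding W_def by blast
  have W_right_regular: "r = \<zero>" if "w \<in> W" "r \<in> carrier R" "r \<otimes> w = \<zero>" for w r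
    using submonoid_closure_right_regular[OF U, of w r] U_right_regular that unfolding W_def by blast
  have "\<zero> \<notin> W" using W_left_regular[of \<zero> \<one>] assms by auto
  moreover have "W \<subseteq> carrier R" "\<one> \<in> W" "\<And>w v. w \<in> W \<Longrightarrow> v \<in> W \<Longrightarrow> w \<otimes> v \<in> W"
    unfolding W_def using submonoid_closure_carrier[OF U] submonoid_closure.one submonoid_closure_mult[OF U]
    by auto
  moreover have "\<exists>w'\<in>W. \<exists>r'\<in>carrier R. w' \<otimes> r = r' \<otimes> w" if "r \<in> carrier R" "w \<in> W" for r w
    using submonoid_closure_ore[OF U U_ore] that unfolding W_def by blast
  ultimately have "left_ore R W" unfolding left_ore_def mult_closed_def by blast
  then have W_den: "W \<in> Den_l R {\<zero>}"
    using W_left_regular W_right_regular by (rule Den_l_zeroI)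
  have W_greatest: "S' \<subseteq> W" if "S' \<in> Den_l R {\<zero>}" for S'
    using submonoid_closure_superset[OF U] that unfolding U_def W_def by blast
  have "S0 R = W"
    unfolding S0_def S_max_def by (rule Greatest_equality) (use W_den W_greatest in auto)
  then show "S0 R \<in> Den_l R {\<zero>}" and "S' \<in> Den_l R {\<zero>} \<Longrightarrow> S' \<subseteq> S0 R"
    using W_den W_greatest by auto
qed

end

locale den_image = R: ring R + B: ring B
  for R :: "('a, 'm) ring_scheme" (structure) and B :: "('b, 'n) ring_scheme" +
  fixes h :: "'a \<Rightarrow> 'b" and S :: "'a set" and a :: "'a set"
  assumes hom: "h \<in> ring_hom R B" and surj: "h ` carrier R = carrier B"
    and S_den: "S \<in> Den_l R a" and kernel: "{r \<in> carrier R. h r = \<zero>\<^bsub>B\<^esub>} = a"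
begin

sublocale h: ring_hom_ring R B h
  by unfold_locales (rule hom)

lemma S_carrier: "s \<in> S \<Longrightarrow> s \<in> carrier R"
  using Den_lD(1)[OF S_den] by blast

lemma h_zero_iff: "r \<in> carrier R \<Longrightarrow> h r = \<zero>\<^bsub>B\<^esub> \<longleftrightarrow> (\<exists>t\<in>S. t \<otimes> r = \<zero>)"
  using kernel Den_lD(7)[OF S_den] unfolding ass_def by auto

lemma obtain_preimage:
  assumes "b \<in> carrier B"
  obtains r where "r \<in> carrier R" "b = h r"
  using assms surj by (metis imageE)

lemma h_zero_cancel_S:
  assumes r: "r \<in> carrier R" and s: "s \<in> S" and sr: "h (s \<otimes> r) = \<zero>\<^bsub>B\<^esub>"
  shows "h r = \<zero>\<^bsub>B\<^esub>"
proof -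
  have "s \<otimes> r \<in> carrier R" using r s S_carrier by simp
  then obtain t where t: "t \<in> S" "t \<otimes> (s \<otimes> r) = \<zero>"
    using h_zero_iff sr by blast
  then have "(t \<otimes> s) \<otimes> r = \<zero>" using r s S_carrier by (simp add: R.m_assoc)
  then show ?thesis using h_zero_iff[OF r] Den_lD(4)[OF S_den t(1) s] by blast
qed

lemma image_mult_closed: "mult_closed B (h ` S)"
  unfolding mult_closed_def
proof (intro conjI ballI)
  show "h ` S \<subseteq> carrier B" using S_carrier by auto
  show "\<one>\<^bsub>B\<^esub> \<in> h ` S" using Den_lD(2)[OF S_den] h.hom_one by force
  show "\<zero>\<^bsub>B\<^esub> \<notin> h ` S"
  proof
    assume "\<zero>\<^bsub>B\<^esub> \<in> h ` S"
    then obtain s where s: "s \<in> S" "h s = \<zero>\<^bsub>B\<^esub>" by auto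
    then have "h \<one> = \<zero>\<^bsub>B\<^esub>" using h_zero_cancel_S[of \<one> s] S_carrier by simp
    then obtain t where "t \<in> S" "t = \<zero>" using h_zero_iff[of \<one>] S_carrier by auto
    then show False using Den_lD(3)[OF S_den] by blast
  qed
next
  fix x y assume "x \<in> h ` S" "y \<in> h ` S"
  then obtain s t where s: "s \<in> S" and t: "t \<in> S" and "x = h s" "y = h t" by blast
  then have "x \<otimes>\<^bsub>B\<^esub> y = h (s \<otimes> t)" using S_carrier by simp
  then show "x \<otimes>\<^bsub>B\<^esub> y \<in> h ` S" using Den_lD(4)[OF S_den s t] by blast
qed

lemma image_ore:
  assumes b: "b \<in> carrier B" and y: "y \<in> h ` S"
  shows "\<exists>y'\<in>h ` S. \<exists>b'\<in>carrier B. y' \<otimes>\<^bsub>B\<^esub> b = b' \<otimes>\<^bsub>B\<^esub> y"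
proof -
  obtain r where r: "r \<in> carrier R" "b = h r" using obtain_preimage[OF b] .
  obtain s where s: "s \<in> S" "y = h s" using y by blast
  obtain s' r' where s': "s' \<in> S" and r': "r' \<in> carrier R" and swap: "s' \<otimes> r = r' \<otimes> s"
    using Den_lD(5)[OF S_den r(1) s(1)] by blast
  have "h s' \<otimes>\<^bsub>B\<^esub> b = h (s' \<otimes> r)" using r s' S_carrier by simp
  also have "\<dots> = h r' \<otimes>\<^bsub>B\<^esub> y" using swap r' s S_carrier by simp
  finally have "h s' \<otimes>\<^bsub>B\<^esub> b = h r' \<otimes>\<^bsub>B\<^esub> y" .
  moreover have "h r' \<in> carrier B" using r' by simp
  ultimately show ?thesis using s' by blast
qed

lemma image_left_regular:
  assumes y: "y \<in> h ` S" and b: "b \<in> carrier B" and zero: "y \<otimes>\<^bsub>B\<^esub> b = \<zero>\<^bsub>B\<^esub>"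
  shows "b = \<zero>\<^bsub>B\<^esub>"
proof -
  obtain r where r: "r \<in> carrier R" "b = h r" using obtain_preimage[OF b] .
  obtain s where s: "s \<in> S" "y = h s" using y by blast
  have "h (s \<otimes> r) = \<zero>\<^bsub>B\<^esub>" using zero r s S_carrier by simp
  then show ?thesis using h_zero_cancel_S r s by blast
qed

lemma image_right_regular:
  assumes y: "y \<in> h ` S" and b: "b \<in> carrier B" and zero: "b \<otimes>\<^bsub>B\<^esub> y = \<zero>\<^bsub>B\<^esub>"
  shows "b = \<zero>\<^bsub>B\<^esub>"
proof -
  obtain r where r: "r \<in> carrier R" "b = h r" using obtain_preimage[OF b] .
  obtain s where s: "s \<in> S" "y = h s" using y by blast
  have "h (r \<otimes> s) = \<zero>\<^bsub>B\<^esub>" using zero r s S_carrier by simp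
  moreover have "r \<otimes> s \<in> carrier R" using r s S_carrier by simp
  ultimately obtain t where t: "t \<in> S" "t \<otimes> (r \<otimes> s) = \<zero>"
    using h_zero_iff by blast
  then have "(t \<otimes> r) \<otimes> s = \<zero>" using r s S_carrier by (simp add: R.m_assoc)
  moreover have "t \<otimes> r \<in> carrier R" using t r S_carrier by simp
  ultimately obtain t' where t': "t' \<in> S" "t' \<otimes> (t \<otimes> r) = \<zero>"
    using Den_lD(6)[OF S_den _ s(1)] by blast
  then have "(t' \<otimes> t) \<otimes> r = \<zero>" using r t S_carrier by (simp add: R.m_assoc)
  then show ?thesis using h_zero_iff[OF r(1)] Den_lD(4)[OF S_den t'(1) t(1)] r(2) by blast
qed

lemma image_in_Den_l_zero: "h ` S \<in> Den_l B {\<zero>\<^bsub>B\<^esub>}"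
proof (rule B.Den_l_zeroI)
  show "left_ore B (h ` S)"
    unfolding left_ore_def using image_mult_closed image_ore by blast
qed (use image_left_regular image_right_regular in blast)+

end


section \<open>Passing to \<open>R/\<aa>\<close>\<close>

locale left_den_quotient = left_fraction_ring R Q S \<sigma>
  for R :: "('a, 'm) ring_scheme" (structure) and Q :: "('b, 'n) ring_scheme" and S \<sigma> +
  fixes a :: "'a set"
  assumes S_den: "S \<in> Den_l R a"
begin

lemma a_eq_kernel: "a = a_kernel R Q \<sigma>"
  using sigma_kernel Den_lD(7)[OF S_den] unfolding a_kernel_def' by auto

sublocale I: ideal a R
  unfolding a_eq_kernel by (rule \<sigma>.kernel_is_ideal)

lemma quot_ring: "ring (R Quot a)"
  by (rule I.quotient_is_ring)

lemma quot_hom: "(\<lambda>r. a +> r) \<in> ring_hom R (R Quot a)"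
  using I.rcos_ring_hom by simp

lemma quot_surj: "(\<lambda>r. a +> r) ` carrier R = carrier (R Quot a)"
  unfolding FactRing_def A_RCOSETS_def' by auto

lemma quot_kernel: "{r \<in> carrier R. a +> r = \<zero>\<^bsub>R Quot a\<^esub>} = a"
  using I.rcos_const_imp_mem R.a_rcos_zero[OF I.is_ideal] I.a_subset unfolding FactRing_def by auto

lemma quot_one_neq_zero: "\<one>\<^bsub>R Quot a\<^esub> \<noteq> \<zero>\<^bsub>R Quot a\<^esub>"
proof
  assume "\<one>\<^bsub>R Quot a\<^esub> = \<zero>\<^bsub>R Quot a\<^esub>"
  then have "\<one> \<in> ass R S"
    using quot_kernel ring_hom_one[OF quot_hom] Den_lD(7)[OF S_den] by auto
  then obtain s where "s \<in> S" "s \<otimes> \<one> = \<zero>" unfolding ass_def by blast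
  then show False using Den_lD(1,3)[OF S_den] by auto
qed

lemma image_in_S0:
  assumes "S' \<in> Den_l R a"
  shows "(\<lambda>r. a +> r) ` S' \<subseteq> S0 (R Quot a)"
proof -
  interpret img: den_image R "R Quot a" "\<lambda>r. a +> r" S' a
    using assms quot_ring quot_hom quot_surj quot_kernel
    by (intro den_image.intro den_image_axioms.intro R.ring_axioms)
  show ?thesis using img.image_in_Den_l_zero ring.S0_greatest(2)[OF quot_ring quot_one_neq_zero] by blast
qed

sublocale quot: den_preimage R "R Quot a" "\<lambda>r. a +> r" S "S0 (R Quot a)"
proof (intro den_preimage.intro den_preimage_axioms.intro R.ring_axioms quot_ring quot_hom)
  show "S \<subseteq> carrier R" "(\<lambda>r. a +> r) ` S \<subseteq> S0 (R Quot a)"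
    using Den_lD(1)[OF S_den] image_in_S0[OF S_den] by auto
  show "{r \<in> carrier R. a +> r = \<zero>\<^bsub>R Quot a\<^esub>} = ass R S"
    using quot_kernel Den_lD(7)[OF S_den] by simp
  show "S0 (R Quot a) \<in> Den_l (R Quot a) {\<zero>\<^bsub>R Quot a\<^esub>}"
    by (rule ring.S0_greatest(1)[OF quot_ring quot_one_neq_zero])
  fix b assume "b \<in> carrier (R Quot a)"
  then obtain r where "r \<in> carrier R" "b = a +> r" using quot_surj by blast
  moreover have "\<one>\<^bsub>R Quot a\<^esub> \<otimes>\<^bsub>R Quot a\<^esub> b = b"
    using \<open>b \<in> carrier (R Quot a)\<close> by (rule monoid.l_one[OF ring.is_monoid[OF quot_ring]])
  ultimately show "\<exists>s\<in>S. \<exists>r\<in>carrier R. (a +> s) \<otimes>\<^bsub>R Quot a\<^esub> b = a +> r"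
    using ring_hom_one[OF quot_hom] Den_lD(2)[OF S_den] by metis
qed

lemma S_max_eq_preimage: "S_max R a = quot.preimage"
  unfolding S_max_def
proof (rule Greatest_equality)
  show "quot.preimage \<in> Den_l R a"
    using quot.preimage_in_Den_l Den_lD(7)[OF S_den] by simp
  fix S' assume S': "S' \<in> Den_l R a"
  show "S' \<subseteq> quot.preimage"
  proof
    fix s assume "s \<in> S'"
    moreover have "s \<in> carrier R" using Den_lD(1)[OF S'] \<open>s \<in> S'\<close> by blast
    ultimately show "s \<in> quot.preimage" using image_in_S0[OF S'] by blast
  qed
qed

lemma image_S_max: "(\<lambda>r. a +> r) ` S_max R a = S0 (R Quot a)"
proof
  show "(\<lambda>r. a +> r) ` S_max R a \<subseteq> S0 (R Quot a)" unfolding S_max_eq_preimage by blast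
  show "S0 (R Quot a) \<subseteq> (\<lambda>r. a +> r) ` S_max R a"
  proof
    fix x assume x: "x \<in> S0 (R Quot a)"
    then have "x \<in> (\<lambda>r. a +> r) ` carrier R" using quot_surj quot.U_carrier by simp
    then obtain r where "r \<in> carrier R" "x = a +> r" by blast
    then show "x \<in> (\<lambda>r. a +> r) ` S_max R a" unfolding S_max_eq_preimage using x by blast
  qed
qed

lemma S_max_loc_iso:
  assumes loca: "is_left_loc R (S_max R a) Qa \<sigma>a"
    and locl: "is_left_loc (R Quot a) (S0 (R Quot a)) Ql \<sigma>l"
  shows "Qa \<simeq> Ql"
proof -
  have Qa: "ring Qa" and \<sigma>a: "\<sigma>a \<in> ring_hom R Qa"
    and unitsa: "\<And>v. v \<in> S_max R a \<Longrightarrow> \<sigma>a v \<in> Units Qa"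
    and kernela: "{r \<in> carrier R. \<sigma>a r = \<zero>\<^bsub>Qa\<^esub>} = a"
    using loca S_max_eq_preimage quot.preimage_ass Den_lD(7)[OF S_den] unfolding is_left_loc_def by auto
  have Ql: "ring Ql" and \<sigma>l: "\<sigma>l \<in> ring_hom (R Quot a) Ql"
    and unitsl: "\<And>x. x \<in> S0 (R Quot a) \<Longrightarrow> \<sigma>l x \<in> Units Ql"
    and fractionsl: "\<And>p. p \<in> carrier Ql \<Longrightarrow>
      \<exists>x\<in>S0 (R Quot a). \<exists>y\<in>carrier (R Quot a). p = inv\<^bsub>Ql\<^esub> (\<sigma>l x) \<otimes>\<^bsub>Ql\<^esub> \<sigma>l y"
    and kernell: "{y \<in> carrier (R Quot a). \<sigma>l y = \<zero>\<^bsub>Ql\<^esub>} = {\<zero>\<^bsub>R Quot a\<^esub>}"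
    using locl Den_lD(7)[OF quot.U_den] unfolding is_left_loc_def by auto
  have g: "\<sigma>l \<circ> (\<lambda>r. a +> r) \<in> ring_hom R Ql" using ring_hom_trans[OF quot_hom \<sigma>l] .
  have ore: "left_ore R (S_max R a)"
    using quot.preimage_in_Den_l S_max_eq_preimage unfolding Den_l_def left_den_def by simp
  have "(\<sigma>l \<circ> (\<lambda>r. a +> r)) v \<in> Units Ql" if "v \<in> S_max R a" for v
    using unitsl that S_max_eq_preimage by simp
  then obtain \<psi> where \<psi>: "\<psi> \<in> ring_hom Qa Ql" and \<psi>_\<sigma>a: "\<And>r. r \<in> carrier R \<Longrightarrow> \<psi> (\<sigma>a r) = \<sigma>l (a +> r)"
    using left_loc_universal[OF R.ring_axioms Ql ore loca g] by (metis comp_apply)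
  have "\<sigma>a r = \<zero>\<^bsub>Qa\<^esub>" if r: "r \<in> carrier R" and "\<psi> (\<sigma>a r) = \<zero>\<^bsub>Ql\<^esub>" for r
  proof -
    have "a +> r \<in> {y \<in> carrier (R Quot a). \<sigma>l y = \<zero>\<^bsub>Ql\<^esub>}"
      using that \<psi>_\<sigma>a ring_hom_closed[OF quot_hom r] by simp
    then have "r \<in> a" using kernell quot_kernel r by blast
    then show ?thesis using kernela by blast
  qed
  moreover have "\<exists>u\<in>Units Qa. \<exists>x\<in>carrier Qa. p = inv\<^bsub>Ql\<^esub> (\<psi> u) \<otimes>\<^bsub>Ql\<^esub> \<psi> x"
    if "p \<in> carrier Ql" for p
  proof -
    obtain x y where x: "x \<in> S0 (R Quot a)" and y: "y \<in> carrier (R Quot a)"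
      and p: "p = inv\<^bsub>Ql\<^esub> (\<sigma>l x) \<otimes>\<^bsub>Ql\<^esub> \<sigma>l y"
      using fractionsl \<open>p \<in> carrier Ql\<close> by blast
    obtain v where v: "v \<in> S_max R a" "x = a +> v" using x image_S_max by blast
    obtain r where r: "r \<in> carrier R" "y = a +> r" using y unfolding quot_surj[symmetric] by blast
    have "p = inv\<^bsub>Ql\<^esub> (\<psi> (\<sigma>a v)) \<otimes>\<^bsub>Ql\<^esub> \<psi> (\<sigma>a r)"
      using p v r \<psi>_\<sigma>a S_max_eq_preimage by auto
    then show ?thesis using unitsa[OF v(1)] ring_hom_closed[OF \<sigma>a r(1)] by blast
  qed
  ultimately have "\<psi> \<in> ring_iso Qa Ql" using left_loc_hom_iso[OF Ql loca \<psi>] by blast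
  then show ?thesis unfolding is_ring_iso_def by blast
qed

end

theorem lemma3p3:
  fixes R :: "'a ring" and S a :: "'a set"
    and Q :: "'b ring" and \<sigma> :: "'a \<Rightarrow> 'b"
  assumes "ring R"
    and "S \<in> Den_l R a"
    and "is_left_loc R S Q \<sigma>"
  shows
   "(\<forall>T. T \<in> Den_l Q {\<zero>\<^bsub>Q\<^esub>} \<and> \<sigma> ` S \<subseteq> T \<and> {inv\<^bsub>Q\<^esub> (\<sigma> s) | s. s \<in> S} \<subseteq> T \<longrightarrow>
      (let T' = {r \<in> carrier R. \<sigma> r \<in> T} in
        T' \<in> Den_l R a \<and>
        S_saturated R S T' \<and>
        T = {inv\<^bsub>Q\<^esub> (\<sigma> s) \<otimes>\<^bsub>Q\<^esub> \<sigma> t' | s t'. s \<in> S \<and> t' \<in> T'} \<and>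
        (\<forall>(Q1 :: 'c ring) (\<sigma>1 :: 'a \<Rightarrow> 'c). is_left_loc R T' Q1 \<sigma>1 \<longrightarrow>
           (\<exists>\<phi>. \<phi> \<in> ring_hom Q Q1 \<and> (\<forall>r\<in>carrier R. \<phi> (\<sigma> r) = \<sigma>1 r) \<and>
                 inj_on \<phi> (carrier Q)) \<and>
           (\<forall>(Q2 :: 'd ring) (\<tau> :: 'b \<Rightarrow> 'd). is_left_loc Q T Q2 \<tau> \<longrightarrow>
              (\<exists>\<psi>. \<psi> \<in> ring_iso Q1 Q2 \<and> (\<forall>r\<in>carrier R. \<psi> (\<sigma>1 r) = \<tau> (\<sigma> r)))))))
    \<and>
    {r \<in> carrier R. a +>\<^bsub>R\<^esub> r \<in> S0 (R Quot a)} = S_max R a \<and>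
    (\<lambda>r. a +>\<^bsub>R\<^esub> r) ` S_max R a = S0 (R Quot a) \<and>
    (\<forall>(Qa :: 'e ring) (\<sigma>a :: 'a \<Rightarrow> 'e) (Ql :: 'f ring) (\<sigma>l :: 'a set \<Rightarrow> 'f).
        is_left_loc R (S_max R a) Qa \<sigma>a \<and> is_left_loc (R Quot a) (S0 (R Quot a)) Ql \<sigma>l
        \<longrightarrow> Qa \<simeq> Ql)"
proof -
  interpret left_den_quotient R Q S \<sigma> a
    using assms Den_lD(7)[OF assms(2)]
    unfolding left_den_quotient_def left_den_quotient_axioms_def left_fraction_ring_def
      left_fraction_ring_axioms_def Den_l_def left_den_def is_left_loc_def
    by auto
  show ?thesis
    apply (intro conjI allI impI)
    subgoal premises T_assms for T
    proof -
      interpret left_fraction_tower R Q S \<sigma> T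
        using T_assms by unfold_locales auto
      show ?thesis
        unfolding Let_def
        using pre.preimage_in_Den_l Den_lD(7)[OF S_den] preimage_S_saturated T_fractions
          lift_into_preimage_loc preimage_loc_iso
        by auto
    qed
    using S_max_eq_preimage image_S_max S_max_loc_iso by auto
qed

end
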